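(* For all probability measures $P,Q$ and all $\gamma\in[1,\infty)$, $$E_\gamma(P\|Q)\le\tfrac12\Bigl[1-\gamma+\sqrt{(\gamma-1)^2+\frac{4\gamma\,\chi^2(P\|Q)}{1+\gamma+\chi^2(P\|Q)}}\,\Bigr],$$ $$E_\gamma(P\|Q)\le\tfrac12\Bigl[1-\gamma+\sqrt{(\gamma-1)^2+4\gamma\bigl(1-e^{-D(P\|Q)}\bigr)}\,\Bigr],$$ where $D(P\|Q)$ is measured in nats. In particular ($\gamma=1$), $|P-Q|\le 2\sqrt{1-e^{-D(P\|Q)}}$.
   Context: For densities $p,q$ w.r.t. a dominating measure $\mu$: $E_\gamma(P\|Q):=\int(p-\gamma q)^+\,\mathrm{d}\mu$; $|P-Q|:=\int|p-q|\,\mathrm{d}\mu=2E_1(P\|Q)$; $\chi^2(P\|Q):=\int\frac{(p-q)^2}{q}\,\mathrm{d}\mu$ (equal to $+\infty$ if $P\not\ll Q$); $D(P\|Q):=\int p\ln\frac pq\,\mathrm{d}\mu$ (relative entropy in nats, $+\infty$ if $P\not\ll Q$). *)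

theory Defs
  imports "HOL-Analysis.Analysis"
begin

text \<open>Densities p, q with respect to a dominating measure M.\<close>

definition is_prob_density :: "'a measure \<Rightarrow> ('a \<Rightarrow> real) \<Rightarrow> bool" where
  "is_prob_density M p \<longleftrightarrow> p \<in> borel_measurable M \<and> (\<forall>x\<in>space M. 0 \<le> p x)
      \<and> (\<integral>\<^sup>+ x. ennreal (p x) \<partial>M) = 1"

definition E_gamma :: "'a measure \<Rightarrow> real \<Rightarrow> ('a \<Rightarrow> real) \<Rightarrow> ('a \<Rightarrow> real) \<Rightarrow> ennreal" where
  "E_gamma M \<gamma> p q = (\<integral>\<^sup>+ x. ennreal (max 0 (p x - \<gamma> * q x)) \<partial>M)"

definition tv_dist :: "'a measure \<Rightarrow> ('a \<Rightarrow> real) \<Rightarrow> ('a \<Rightarrow> real) \<Rightarrow> ennreal" where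
  "tv_dist M p q = (\<integral>\<^sup>+ x. ennreal \<bar>p x - q x\<bar> \<partial>M)"

text \<open>chi^2(P||Q) = integral of (p-q)^2/q; the integrand is +infinity where q = 0 < p,
  so the value is +infinity when P is not absolutely continuous w.r.t. Q.\<close>
definition chi2 :: "'a measure \<Rightarrow> ('a \<Rightarrow> real) \<Rightarrow> ('a \<Rightarrow> real) \<Rightarrow> ennreal" where
  "chi2 M p q = (\<integral>\<^sup>+ x. (if q x = 0 then (if p x = 0 then 0 else \<infinity>)
                          else ennreal ((p x - q x)\<^sup>2 / q x)) \<partial>M)"

text \<open>Relative entropy D(P||Q) = integral of p ln(p/q) in nats, with conventions
  0 ln(0/q) = 0 and p ln(p/0) = +infinity for p > 0; the extended-real integral is
  the positive part minus the negative part.\<close>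
definition kl_integrand :: "('a \<Rightarrow> real) \<Rightarrow> ('a \<Rightarrow> real) \<Rightarrow> 'a \<Rightarrow> ereal" where
  "kl_integrand p q x = (if p x = 0 then 0 else if q x = 0 then \<infinity>
                          else ereal (p x * ln (p x / q x)))"

definition rel_entropy :: "'a measure \<Rightarrow> ('a \<Rightarrow> real) \<Rightarrow> ('a \<Rightarrow> real) \<Rightarrow> ereal" where
  "rel_entropy M p q =
     enn2ereal (\<integral>\<^sup>+ x. e2ennreal (max 0 (kl_integrand p q x)) \<partial>M)
   - enn2ereal (\<integral>\<^sup>+ x. e2ennreal (max 0 (- kl_integrand p q x)) \<partial>M)"

definition exp_neg_ereal :: "ereal \<Rightarrow> real" where
  "exp_neg_ereal d = (if d = \<infinity> then 0 else if d = -\<infinity> then 0 else exp (- real_of_ereal d))"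

definition chi2_ratio :: "real \<Rightarrow> ennreal \<Rightarrow> real" where
  "chi2_ratio \<gamma> c = (if c = \<infinity> then 1 else enn2real c / (1 + \<gamma> + enn2real c))"

end

theory Submission imports Defs begin

text \<open>Write e = E_gamma(P||Q) and m = (p - gamma q)^+, and split u = p - m, v = gamma q + m.
  Then \<integral>u = 1 - e, \<integral>v = gamma + e, u v = gamma p q and {u, v} = {p, gamma q} pointwise.
  Cauchy-Schwarz gives 1/(1-e) + 1/(gamma+e) \<le> \<integral>p^2/u + \<integral>p^2/v = 1 + (1 + chi^2)/gamma and
  gamma (\<integral>sqrt(p q))^2 \<le> (1-e)(gamma+e); both rearrange to a bound on e (e + gamma - 1),
  a quadratic in e.  For relative entropy, Jensen's inequality gives \<integral>sqrt(p q) \<ge> exp(-D/2).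
  Cauchy-Schwarz is used in the variational form x^2/a = sup_l (2 l x - l^2 a), which needs
  integrability of integrands linear in p, q and m only.\<close>

lemma sq_le_mult_if_quadratic_bound:
  fixes a x S :: real
  assumes "0 \<le> a" and bound: "\<And>l. 2 * l * x - l\<^sup>2 * a \<le> S"
  shows "x\<^sup>2 \<le> a * S"
proof (cases "a = 0")
  case True
  have "x = 0"
  proof (rule ccontr)
    assume "x \<noteq> 0"
    then have "2 * ((\<bar>S\<bar> + 1) / x) * x = 2 * (\<bar>S\<bar> + 1)" by simp
    then show False using bound[of "(\<bar>S\<bar> + 1) / x"] True by simp
  qed
  then show ?thesis using True by simp
next
  case False
  then have "0 < a" using assms(1) by simp
  moreover have "2 * (x / a) * x - (x / a)\<^sup>2 * a = x\<^sup>2 / a"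
    using \<open>0 < a\<close> by (simp add: field_simps power2_eq_square)
  ultimately have "x\<^sup>2 / a \<le> S" using bound[of "x / a"] by simp
  then show ?thesis using \<open>0 < a\<close> by (simp add: field_simps)
qed

lemma le_quadratic_root:
  fixes e g r :: real
  assumes "0 \<le> e" "1 \<le> g" "e * (e + g - 1) \<le> g * r"
  shows "e \<le> (1 - g + sqrt ((g - 1)\<^sup>2 + 4 * g * r)) / 2"
proof -
  have "(2 * e + g - 1)\<^sup>2 \<le> (g - 1)\<^sup>2 + 4 * g * r"
    using assms by (simp add: power2_eq_square algebra_simps)
  then have "sqrt ((2 * e + g - 1)\<^sup>2) \<le> sqrt ((g - 1)\<^sup>2 + 4 * g * r)" by (rule real_sqrt_le_mono)
  then show ?thesis using assms by simp
qed

lemma tangent_le_sq_div: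
  fixes a b l :: real
  assumes "0 < a"
  shows "2 * l * b - l\<^sup>2 * a \<le> b\<^sup>2 / a"
proof -
  have "b\<^sup>2 / a - (2 * l * b - l\<^sup>2 * a) = (b - l * a)\<^sup>2 / a"
    using assms by (simp add: field_simps power2_eq_square)
  then show ?thesis using assms by (smt (verit) divide_nonneg_pos zero_le_power2)
qed

lemma tangent_le_self:
  fixes l p :: real
  assumes "0 \<le> p"
  shows "2 * l * p - l\<^sup>2 * p \<le> p"
proof -
  have "0 \<le> p * (1 - l)\<^sup>2" using assms by simp
  then show ?thesis by (simp add: power2_eq_square algebra_simps)
qed

lemma chi2_split_pointwise_bound:
  fixes p q g l k :: real
  assumes "0 \<le> p" "0 < q" "0 < g"
  shows "2 * l * p - l\<^sup>2 * (p - max 0 (p - g * q)) + 2 * k * p - k\<^sup>2 * (g * q + max 0 (p - g * q))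
           \<le> p + p\<^sup>2 / (g * q)"
proof (cases "p \<le> g * q")
  case True
  then show ?thesis
    using tangent_le_self[OF assms(1), of l] tangent_le_sq_div[of "g * q" k p] assms by simp
next
  case False
  then show ?thesis
    using tangent_le_self[OF assms(1), of k] tangent_le_sq_div[of "g * q" l p] assms by simp
qed

lemma hellinger_split_pointwise_bound:
  fixes p q g t :: real
  assumes "0 \<le> p" "0 \<le> q" "0 \<le> g"
  shows "2 * t * (sqrt g * sqrt (p * q)) \<le> t\<^sup>2 * (p - max 0 (p - g * q)) + (g * q + max 0 (p - g * q))"
proof -
  define u where "u = p - max 0 (p - g * q)"
  define v where "v = g * q + max 0 (p - g * q)"
  have "0 \<le> u" "0 \<le> v" using assms by (auto simp: u_def v_def)
  have "u * v = g * (p * q)"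
    using assms by (cases "p \<le> g * q") (auto simp: u_def v_def max_def algebra_simps)
  then have "sqrt g * sqrt (p * q) = sqrt u * sqrt v" by (metis real_sqrt_mult)
  moreover have "0 \<le> (t * sqrt u - sqrt v)\<^sup>2" by simp
  then have "2 * t * (sqrt u * sqrt v) \<le> t\<^sup>2 * u + v"
    using \<open>0 \<le> u\<close> \<open>0 \<le> v\<close> by (simp add: power2_eq_square algebra_simps)
  ultimately show ?thesis by (simp add: u_def v_def)
qed

text \<open>The relative-entropy integrand is bounded below through \<open>ln y \<le> y - 1\<close> at
  \<open>y = \<surd>(q/p) / c\<close>.\<close>
lemma kl_pointwise_lower_bound:
  fixes p q c :: real
  assumes "0 < p" "0 < q" "0 < c"
  shows "- (p * ln (p / q)) \<le> 2 * (p * ln c + sqrt (p * q) / c - p)"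
proof -
  define y where "y = sqrt (p * q) / (p * c)"
  have "0 < y" using assms by (simp add: y_def)
  have "ln y = (ln p + ln q) / 2 - ln p - ln c"
    using assms by (simp add: y_def ln_div ln_mult ln_sqrt)
  then have "ln q = ln p + 2 * ln c + 2 * ln y" by (simp add: field_simps)
  then have "p * ln (p / q) = - 2 * (p * ln y) - 2 * (p * ln c)"
    using assms by (simp add: ln_div algebra_simps)
  moreover have "p * ln y \<le> p * (y - 1)" using ln_le_minus_one[OF \<open>0 < y\<close>] assms by simp
  moreover have "p * y = sqrt (p * q) / c" using assms by (simp add: y_def)
  ultimately show ?thesis by (simp add: algebra_simps)
qed

lemma prob_density_integrable_integral:
  assumes "is_prob_density M f"
  shows "integrable M f" "integral\<^sup>L M f = 1"
proof -
  have f: "f \<in> borel_measurable M" "AE x in M. 0 \<le> f x" "(\<integral>\<^sup>+ x. ennreal (f x) \<partial>M) = 1"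
    using assms unfolding is_prob_density_def by auto
  show int: "integrable M f" using integrableI_nn_integral_finite[OF f(1,2), of 1] f(3) by simp
  have "ennreal (integral\<^sup>L M f) = 1" using nn_integral_eq_integral[OF int f(2)] f(3) by simp
  then show "integral\<^sup>L M f = 1"
    by (metis ennreal_1 ennreal_inj integral_nonneg_AE f(2) zero_le_one)
qed

locale prob_density_pair =
  fixes M :: "'a measure" and p q :: "'a \<Rightarrow> real"
  assumes P: "is_prob_density M p" and Q: "is_prob_density M q"
begin

lemma p_measurable[measurable]: "p \<in> borel_measurable M"
  and q_measurable[measurable]: "q \<in> borel_measurable M"
  and p_nonneg: "x \<in> space M \<Longrightarrow> 0 \<le> p x"
  and q_nonneg: "x \<in> space M \<Longrightarrow> 0 \<le> q x"
  using P Q unfolding is_prob_density_def by auto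

lemma p_integrable: "integrable M p" and p_integral: "integral\<^sup>L M p = 1"
  and q_integrable: "integrable M q" and q_integral: "integral\<^sup>L M q = 1"
  using prob_density_integrable_integral P Q by auto

definition excess :: "real \<Rightarrow> 'a \<Rightarrow> real" where
  "excess g x = max 0 (p x - g * q x)"

definition hockey_stick :: "real \<Rightarrow> real" where
  "hockey_stick g = integral\<^sup>L M (excess g)"

lemma excess_measurable[measurable]: "excess g \<in> borel_measurable M"
  unfolding excess_def by measurable

context
  fixes g :: real
  assumes g_nonneg: "0 \<le> g"
begin

lemma excess_le_p: "x \<in> space M \<Longrightarrow> excess g x \<le> p x"
  using p_nonneg q_nonneg g_nonneg by (auto simp: excess_def)

lemma excess_integrable: "integrable M (excess g)"
  by (rule Bochner_Integration.integrable_bound[OF p_integrable])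
     (use p_nonneg excess_le_p in \<open>auto simp: excess_def\<close>)

lemma E_gamma_eq_hockey_stick: "E_gamma M g p q = ennreal (hockey_stick g)"
  using nn_integral_eq_integral[OF excess_integrable]
  unfolding E_gamma_def hockey_stick_def by (simp add: excess_def)

lemma hockey_stick_nonneg: "0 \<le> hockey_stick g"
  unfolding hockey_stick_def by (rule integral_nonneg_AE) (auto simp: excess_def)

lemma hockey_stick_le_1: "hockey_stick g \<le> 1"
  using integral_mono[OF excess_integrable p_integrable] excess_le_p p_integral
  unfolding hockey_stick_def by simp

lemma hockey_stick_quadratic_le: "hockey_stick g * (hockey_stick g + g - 1) \<le> g"
proof (cases "hockey_stick g + g - 1 \<le> 0")
  case True
  then show ?thesis using mult_nonneg_nonpos[OF hockey_stick_nonneg True] g_nonneg by linarith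
next
  case False
  then have "hockey_stick g * (hockey_stick g + g - 1) \<le> 1 * (1 + g - 1)"
    using hockey_stick_nonneg hockey_stick_le_1 by (intro mult_mono) auto
  then show ?thesis by simp
qed

end

definition chi2_density :: "'a \<Rightarrow> real" where
  "chi2_density x = (if q x = 0 then 0 else (p x - q x)\<^sup>2 / q x)"

lemma chi2_density_measurable[measurable]: "chi2_density \<in> borel_measurable M"
  unfolding chi2_density_def by measurable

lemma chi2_finite_imp:
  assumes "chi2 M p q \<noteq> \<infinity>"
  shows "AE x in M. q x = 0 \<longrightarrow> p x = 0"
    and "integrable M chi2_density"
    and "chi2 M p q = ennreal (integral\<^sup>L M chi2_density)"
proof -
  define F where "F x = (if q x = 0 then (if p x = 0 then 0 else \<infinity>)
                          else ennreal ((p x - q x)\<^sup>2 / q x))" for x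
  have "F \<in> borel_measurable M" unfolding F_def by measurable
  moreover have chi_F: "chi2 M p q = integral\<^sup>N M F" unfolding chi2_def F_def by simp
  ultimately have "AE x in M. F x \<noteq> \<infinity>" using nn_integral_PInf_AE assms by simp
  then show ac: "AE x in M. q x = 0 \<longrightarrow> p x = 0"
    by eventually_elim (auto simp: F_def split: if_splits)
  have "AE x in M. F x = ennreal (chi2_density x)"
    using ac by eventually_elim (auto simp: F_def chi2_density_def)
  then have chi: "chi2 M p q = (\<integral>\<^sup>+ x. ennreal (chi2_density x) \<partial>M)"
    using chi_F by (simp add: nn_integral_cong_AE)
  have nonneg: "AE x in M. 0 \<le> chi2_density x" using q_nonneg by (auto simp: chi2_density_def)
  have "chi2 M p q = ennreal (enn2real (chi2 M p q))" using assms by (simp add: less_top)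
  then show int: "integrable M chi2_density"
    using integrableI_nn_integral_finite[OF chi2_density_measurable nonneg] chi by metis
  show "chi2 M p q = ennreal (integral\<^sup>L M chi2_density)"
    using chi nn_integral_eq_integral[OF int nonneg] by simp
qed

text \<open>Pointwise \<open>(p - q)\<^sup>2/q = p\<^sup>2/q - 2 p + q\<close> turns the bound of
  \<open>chi2_split_pointwise_bound\<close> into one with integrable right-hand side.\<close>
lemma hockey_stick_chi2_bound:
  assumes "0 < g" and "chi2 M p q \<noteq> \<infinity>"
  defines "e \<equiv> hockey_stick g" and "c \<equiv> integral\<^sup>L M chi2_density"
  shows "e * (e + g - 1) * (1 + g + c) \<le> g * c"
proof -
  note chi = chi2_finite_imp[OF assms(2)]
  have e01: "0 \<le> e" "e \<le> 1" using hockey_stick_nonneg hockey_stick_le_1 assms(1) by (auto simp: e_def)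
  have "0 \<le> c" unfolding c_def by (rule integral_nonneg_AE) (use q_nonneg in \<open>auto simp: chi2_density_def\<close>)
  define S where "S = 1 + (c + 1) / g"
  have quad: "2 * l * 1 - l\<^sup>2 * (1 - e) + (2 * k - k\<^sup>2 * (g + e)) \<le> S" for l k
  proof -
    have "(\<integral>x. 2 * l * p x - l\<^sup>2 * (p x - excess g x) + 2 * k * p x - k\<^sup>2 * (g * q x + excess g x) \<partial>M)
        \<le> (\<integral>x. p x + (chi2_density x + 2 * p x - q x) / g \<partial>M)"
    proof (rule integral_mono_AE)
      show "AE x in M. 2 * l * p x - l\<^sup>2 * (p x - excess g x) + 2 * k * p x - k\<^sup>2 * (g * q x + excess g x)
          \<le> p x + (chi2_density x + 2 * p x - q x) / g"
        using chi(1) AE_space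
      proof eventually_elim
        case (elim x)
        show ?case
        proof (cases "q x = 0")
          case False
          then have "0 < q x" using q_nonneg elim by (simp add: less_le)
          moreover have "(chi2_density x + 2 * p x - q x) / g = (p x)\<^sup>2 / (g * q x)"
            using \<open>0 < q x\<close> by (simp add: chi2_density_def field_simps power2_eq_square)
          ultimately show ?thesis
            unfolding excess_def using chi2_split_pointwise_bound p_nonneg elim assms(1) by simp
        qed (use elim in \<open>simp add: excess_def chi2_density_def\<close>)
      qed
    qed (use p_integrable q_integrable excess_integrable[OF less_imp_le[OF assms(1)]] chi(2) in auto)
    moreover have "(\<integral>x. p x + (chi2_density x + 2 * p x - q x) / g \<partial>M) = S"
      using p_integrable p_integral q_integrable q_integral chi(2) by (simp add: S_def c_def)
    moreover have "(\<integral>x. 2 * l * p x - l\<^sup>2 * (p x - excess g x) + 2 * k * p x - k\<^sup>2 * (g * q x + excess g x) \<partial>M)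
        = 2 * l * 1 - l\<^sup>2 * (1 - e) + (2 * k - k\<^sup>2 * (g + e))"
      using p_integrable p_integral q_integrable q_integral excess_integrable[OF less_imp_le[OF assms(1)]]
      by (simp add: e_def hockey_stick_def algebra_simps)
    ultimately show ?thesis by simp
  qed
  have "0 < g + e" using e01 assms(1) by simp
  then have "2 * (1 / (g + e)) - (1 / (g + e))\<^sup>2 * (g + e) = 1 / (g + e)"
    by (simp add: power2_eq_square)
  then have "1\<^sup>2 \<le> (1 - e) * (S - 1 / (g + e))"
    using quad[of _ "1 / (g + e)"] e01
    by (intro sq_le_mult_if_quadratic_bound) (auto simp: algebra_simps)
  then have "g * (g + e) * 1 \<le> g * (g + e) * ((1 - e) * (S - 1 / (g + e)))"
    using \<open>0 < g + e\<close> assms(1) by (intro mult_left_mono) auto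
  also have "\<dots> = (1 - e) * ((g + e) * (g * S) - g * ((g + e) * (1 / (g + e))))"
    by (simp only: algebra_simps)
  also have "\<dots> = (1 - e) * ((g + e) * (g + c + 1) - g)"
    using \<open>0 < g + e\<close> assms(1) by (simp add: S_def field_simps)
  finally show ?thesis by (simp add: algebra_simps)
qed

lemma hockey_stick_chi2_ratio_bound:
  assumes "0 < g"
  shows "hockey_stick g * (hockey_stick g + g - 1) \<le> g * chi2_ratio g (chi2 M p q)"
proof (cases "chi2 M p q = \<infinity>")
  case True
  then show ?thesis using hockey_stick_quadratic_le assms by (simp add: chi2_ratio_def)
next
  case False
  define c where "c = integral\<^sup>L M chi2_density"
  have "0 \<le> c" unfolding c_def by (rule integral_nonneg_AE) (use q_nonneg in \<open>auto simp: chi2_density_def\<close>)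
  then have "0 < 1 + g + c" using assms by simp
  then have "hockey_stick g * (hockey_stick g + g - 1) \<le> g * c / (1 + g + c)"
    using hockey_stick_chi2_bound[OF assms False] by (simp add: c_def pos_le_divide_eq)
  moreover have "chi2_ratio g (chi2 M p q) = c / (1 + g + c)"
    using False chi2_finite_imp(3)[OF False] \<open>0 \<le> c\<close> by (simp add: chi2_ratio_def c_def)
  ultimately show ?thesis by simp
qed

definition bhattacharyya :: real where
  "bhattacharyya = (\<integral>x. sqrt (p x * q x) \<partial>M)"

lemma sqrt_density_product_integrable: "integrable M (\<lambda>x. sqrt (p x * q x))"
proof (rule Bochner_Integration.integrable_bound[of M "\<lambda>x. p x + q x"])
  show "integrable M (\<lambda>x. p x + q x)" using p_integrable q_integrable by auto
  show "AE x in M. norm (sqrt (p x * q x)) \<le> norm (p x + q x)"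
  proof (rule AE_I2)
    fix x assume x: "x \<in> space M"
    have "sqrt (p x * q x) \<le> (p x + q x) / 2"
      by (rule arith_geo_mean_sqrt) (use p_nonneg q_nonneg x in auto)
    then show "norm (sqrt (p x * q x)) \<le> norm (p x + q x)" using p_nonneg[OF x] q_nonneg[OF x] by simp
  qed
qed simp

lemma hockey_stick_hellinger_bound:
  assumes "0 \<le> g"
  defines "e \<equiv> hockey_stick g"
  shows "e * (e + g - 1) \<le> g * (1 - bhattacharyya\<^sup>2)"
proof -
  have quad: "2 * t * (sqrt g * bhattacharyya) - t\<^sup>2 * (1 - e) \<le> g + e" for t
  proof -
    have "(\<integral>x. 2 * t * (sqrt g * sqrt (p x * q x)) \<partial>M)
        \<le> (\<integral>x. t\<^sup>2 * (p x - excess g x) + 1 * (g * q x + excess g x) \<partial>M)"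
      by (rule integral_mono)
         (use p_integrable q_integrable excess_integrable[OF assms(1)] sqrt_density_product_integrable
            hellinger_split_pointwise_bound p_nonneg q_nonneg assms(1) in \<open>auto simp: excess_def\<close>)
    then show ?thesis
      using sqrt_density_product_integrable p_integrable q_integrable excess_integrable[OF assms(1)]
        p_integral q_integral
      by (simp add: bhattacharyya_def e_def hockey_stick_def)
  qed
  have "(sqrt g * bhattacharyya)\<^sup>2 \<le> (1 - e) * (g + e)"
    using hockey_stick_le_1[OF assms(1)] quad by (intro sq_le_mult_if_quadratic_bound) (auto simp: e_def)
  then show ?thesis using assms(1) by (simp add: power_mult_distrib algebra_simps)
qed

definition kl_density :: "'a \<Rightarrow> real" where
  "kl_density x = (if p x = 0 \<or> q x = 0 then 0 else p x * ln (p x / q x))"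

lemma kl_density_measurable[measurable]: "kl_density \<in> borel_measurable M"
  unfolding kl_density_def by measurable

lemma rel_entropy_real_imp:
  assumes "rel_entropy M p q = ereal d"
  shows "AE x in M. p x \<noteq> 0 \<longrightarrow> q x \<noteq> 0"
    and "integrable M kl_density"
    and "d = integral\<^sup>L M kl_density"
proof -
  define pos where "pos = (\<integral>\<^sup>+ x. e2ennreal (max 0 (kl_integrand p q x)) \<partial>M)"
  define neg where "neg = (\<integral>\<^sup>+ x. e2ennreal (max 0 (- kl_integrand p q x)) \<partial>M)"
  have D: "enn2ereal pos - enn2ereal neg = ereal d"
    using assms by (simp add: rel_entropy_def pos_def neg_def)
  then have pos_fin: "pos \<noteq> \<infinity>" by (cases "enn2ereal neg") auto
  then have neg_fin: "neg \<noteq> \<infinity>" using D by (cases "enn2ereal pos") auto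
  have "kl_integrand p q \<in> borel_measurable M" unfolding kl_integrand_def by measurable
  then have "AE x in M. e2ennreal (max 0 (kl_integrand p q x)) \<noteq> \<infinity>"
    by (intro nn_integral_PInf_AE) (use pos_fin in \<open>auto simp: pos_def\<close>)
  then show ac: "AE x in M. p x \<noteq> 0 \<longrightarrow> q x \<noteq> 0"
    by eventually_elim (auto simp: kl_integrand_def split: if_splits)
  have AE_kl: "AE x in M. kl_integrand p q x = ereal (kl_density x)"
    using ac by eventually_elim (auto simp: kl_integrand_def kl_density_def)
  have e2ennreal_max: "e2ennreal (max 0 (ereal r)) = ennreal (max 0 r)" for r :: real
    by (simp add: max_def zero_ennreal_def[symmetric] flip: e2ennreal_ereal zero_ereal_def)
  have pos: "pos = (\<integral>\<^sup>+ x. ennreal (max 0 (kl_density x)) \<partial>M)"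
    unfolding pos_def using AE_kl by (intro nn_integral_cong_AE) (auto elim!: eventually_mono simp: e2ennreal_max)
  have neg: "neg = (\<integral>\<^sup>+ x. ennreal (max 0 (- kl_density x)) \<partial>M)"
    unfolding neg_def using AE_kl
    by (intro nn_integral_cong_AE) (auto elim!: eventually_mono simp: e2ennreal_max[of "- _", simplified])
  have int_pos: "integrable M (\<lambda>x. max 0 (kl_density x))"
    using integrableI_nn_integral_finite[of "\<lambda>x. max 0 (kl_density x)" M "enn2real pos"] pos pos_fin
    by (simp add: less_top)
  have int_neg: "integrable M (\<lambda>x. max 0 (- kl_density x))"
    using integrableI_nn_integral_finite[of "\<lambda>x. max 0 (- kl_density x)" M "enn2real neg"] neg neg_fin
    by (simp add: less_top)
  have eq: "kl_density = (\<lambda>x. max 0 (kl_density x) - max 0 (- kl_density x))" by auto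
  show "integrable M kl_density" by (subst eq) (use int_pos int_neg in auto)
  have "pos = ennreal (\<integral>x. max 0 (kl_density x) \<partial>M)" "neg = ennreal (\<integral>x. max 0 (- kl_density x) \<partial>M)"
    using pos neg nn_integral_eq_integral[OF int_pos] nn_integral_eq_integral[OF int_neg] by simp_all
  then show "d = integral\<^sup>L M kl_density"
    using D int_pos int_neg by (subst eq) (simp add: Bochner_Integration.integral_diff)
qed

lemma exp_neg_rel_entropy_le_bhattacharyya_sq:
  "exp_neg_ereal (rel_entropy M p q) \<le> bhattacharyya\<^sup>2"
proof (cases "rel_entropy M p q")
  case (real d)
  note kl = rel_entropy_real_imp[OF real]
  define c where "c = exp (- d / 2)"
  have "0 < c" by (simp add: c_def)
  have "(\<integral>x. - kl_density x \<partial>M) \<le> (\<integral>x. 2 * (p x * ln c + sqrt (p x * q x) / c - p x) \<partial>M)"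
  proof (rule integral_mono_AE)
    show "AE x in M. - kl_density x \<le> 2 * (p x * ln c + sqrt (p x * q x) / c - p x)"
      using kl(1) AE_space
    proof eventually_elim
      case (elim x)
      then show ?case
        using kl_pointwise_lower_bound[of "p x" "q x" c] p_nonneg q_nonneg \<open>0 < c\<close>
        by (cases "p x = 0") (auto simp: kl_density_def less_le)
    qed
  qed (use p_integrable sqrt_density_product_integrable kl(2) in auto)
  then have "- d \<le> 2 * (ln c + bhattacharyya / c - 1)"
    using kl p_integrable p_integral sqrt_density_product_integrable by (simp add: bhattacharyya_def)
  moreover have "ln c = - d / 2" by (simp add: c_def)
  ultimately have "c \<le> bhattacharyya" using \<open>0 < c\<close> by (simp add: field_simps)
  then have "c\<^sup>2 \<le> bhattacharyya\<^sup>2" using \<open>0 < c\<close> by (simp add: power_mono)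
  then show ?thesis using real by (simp add: exp_neg_ereal_def c_def power2_eq_square flip: exp_add)
qed (simp_all add: exp_neg_ereal_def)

lemma hockey_stick_kl_bound:
  assumes "0 \<le> g"
  shows "hockey_stick g * (hockey_stick g + g - 1) \<le> g * (1 - exp_neg_ereal (rel_entropy M p q))"
  using hockey_stick_hellinger_bound[OF assms] exp_neg_rel_entropy_le_bhattacharyya_sq
    mult_left_mono[OF _ assms] by (smt (verit))

lemma tv_dist_eq_twice_E_1: "tv_dist M p q = 2 * E_gamma M 1 p q"
proof -
  have "(\<integral>x. \<bar>p x - q x\<bar> \<partial>M) = (\<integral>x. 2 * excess 1 x + q x - p x \<partial>M)"
    by (rule Bochner_Integration.integral_cong) (auto simp: excess_def abs_if max_def)
  also have "\<dots> = 2 * hockey_stick 1"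
    using excess_integrable[of 1] p_integrable q_integrable p_integral q_integral
    by (simp add: hockey_stick_def)
  finally show ?thesis
    using nn_integral_eq_integral[of M "\<lambda>x. \<bar>p x - q x\<bar>"] p_integrable q_integrable
      E_gamma_eq_hockey_stick[of 1] hockey_stick_nonneg[of 1]
    by (simp add: tv_dist_def ennreal_mult)
qed

lemma E_gamma_le_quadratic_root:
  assumes "1 \<le> g" and "hockey_stick g * (hockey_stick g + g - 1) \<le> g * r"
  shows "E_gamma M g p q \<le> ennreal ((1 - g + sqrt ((g - 1)\<^sup>2 + 4 * g * r)) / 2)"
  using le_quadratic_root[OF hockey_stick_nonneg assms(1,2)] E_gamma_eq_hockey_stick assms(1)
  by (simp add: ennreal_leI)

end

theorem corollary3:
  fixes M :: "'a measure" and p q :: "'a \<Rightarrow> real" and \<gamma> :: real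
  assumes "is_prob_density M p" and "is_prob_density M q" and "1 \<le> \<gamma>"
  shows "E_gamma M \<gamma> p q \<le> ennreal ((1 - \<gamma> + sqrt ((\<gamma> - 1)\<^sup>2 + 4 * \<gamma> * chi2_ratio \<gamma> (chi2 M p q))) / 2)
     \<and> E_gamma M \<gamma> p q \<le> ennreal ((1 - \<gamma> + sqrt ((\<gamma> - 1)\<^sup>2 + 4 * \<gamma> * (1 - exp_neg_ereal (rel_entropy M p q)))) / 2)
     \<and> tv_dist M p q \<le> ennreal (2 * sqrt (1 - exp_neg_ereal (rel_entropy M p q)))"
proof -
  interpret prob_density_pair M p q using assms(1,2) by unfold_locales
  define r where "r = 1 - exp_neg_ereal (rel_entropy M p q)"
  have "hockey_stick 1 * (hockey_stick 1 + 1 - 1) \<le> 1 * r"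
    using hockey_stick_kl_bound[of 1] by (simp add: r_def)
  from E_gamma_le_quadratic_root[OF order_refl this]
  have "E_gamma M 1 p q \<le> ennreal (sqrt r)" by (simp add: real_sqrt_mult)
  then have "2 * E_gamma M 1 p q \<le> 2 * ennreal (sqrt r)" by (rule mult_left_mono) simp
  then have "tv_dist M p q \<le> ennreal (2 * sqrt r)"
    using tv_dist_eq_twice_E_1 by (simp add: ennreal_mult')
  then show ?thesis
    using E_gamma_le_quadratic_root[OF assms(3) hockey_stick_chi2_ratio_bound]
      E_gamma_le_quadratic_root[OF assms(3) hockey_stick_kl_bound] assms(3)
    by (simp add: r_def)
qed

end
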